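(* Let $(K,w_K)$ and $(H,w_H)$ be weighted graphs (1-dimensional weighted simplicial complexes) such that $(H,w_H)$ is a subgraph of $(K,w_K)$ and their proper difference $(L,w_L)$ exists, i.e. $L=K$, $w_L=w_K-w_H$ (with $w_H$ extended by $0$ outside $H$) and $\{F\in K:w_L(F)>0\}$ is a simplicial complex. Assume $w_K$ and $w_L$ satisfy the normalizing condition, and let $\lambda_1\le\dots\le\lambda_N$ and $\theta_1\le\dots\le\theta_N$ ($N$ the number of vertices of $K$) be the eigenvalues of the normalized graph Laplacians $\Delta^{up}_0(K)=\mathcal{L}^{up}_0(K,w_K)$ and $\Delta^{up}_0(L)=\mathcal{L}^{up}_0(L,w_L)$, respectively. With the conventions $\lambda_j=0$ for $1-\dim C^0(H,\mathbb{R})+\dim H^0(H,\mathbb{R})\le j\le 0$ and $\lambda_j=2$ for $N+1\le j\le N+\dim C^0(H,\mathbb{R})$, for all $k=1,\dots,N$: $$\lambda_{k-\dim C^0(H,\mathbb{R})+\dim H^0(H,\mathbb{R})}\le\theta_k\le\lambda_{k+\dim C^0(H,\mathbb{R})}.$$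
   Context: For a graph $G$ (vertices $S_0$, edges $S_1$) with weight function $w\ge0$ on vertices and edges, $C^0(G,\mathbb{R})$ is the space of functions on vertices with inner product $(f,g)=\sum_v w(v)f(v)g(v)$, $C^1$ the space of functions on oriented edges with $(\bar f,\bar g)=\sum_e w(e)\bar f(e)\bar g(e)$, $(\delta_0 f)([u,v])=f(v)-f(u)$, and the formal adjoint $(\delta_0^*\bar f)(v)=\sum_{e\ni v}\frac{w(e)}{w(v)}\mathrm{sgn}(v,\partial e)\bar f(e)$ if $w(v)\neq0$ and $0$ if $w(v)=0$, where $\mathrm{sgn}(v,\partial[u,v])=1$, $\mathrm{sgn}(u,\partial[u,v])=-1$. $\mathcal{L}^{up}_0(G,w)=\delta_0^*\delta_0$. A subgraph $(H,w_H)$ of $(K,w_K)$ is a subcomplex with $w_H\le w_K$ on its faces. The normalizing condition: $w(v)=\sum_{e\ni v}w(e)$ for every vertex $v$ that lies on at least one edge. $\dim C^0(H,\mathbb{R})$ is the number of vertices of $H$ and $\dim H^0(H,\mathbb{R})$ its number of connected components. *)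

theory Defs
  imports "HOL-Analysis.Analysis" "HOL-Computational_Algebra.Polynomial"
begin

definition is_complex1 :: "'a set set \<Rightarrow> bool" where
  "is_complex1 S \<longleftrightarrow> (\<forall>F\<in>S. F \<noteq> {} \<and> finite F \<and> card F \<le> 2) \<and>
     (\<forall>F\<in>S. \<forall>G. G \<subseteq> F \<and> G \<noteq> {} \<longrightarrow> G \<in> S)"

definition vertices :: "'a set set \<Rightarrow> 'a set" where
  "vertices S = {v. {v} \<in> S}"

definition edges_at :: "'a set set \<Rightarrow> 'a \<Rightarrow> 'a set set" where
  "edges_at S v = {e \<in> S. card e = 2 \<and> v \<in> e}"

definition weighted_subgraph ::
  "'a set set \<Rightarrow> ('a set \<Rightarrow> real) \<Rightarrow> 'a set set \<Rightarrow> ('a set \<Rightarrow> real) \<Rightarrow> bool" where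
  "weighted_subgraph H wH K wK \<longleftrightarrow> is_complex1 H \<and> is_complex1 K \<and> H \<subseteq> K \<and>
     (\<forall>F\<in>H. wH F \<le> wK F)"

definition diff_weight :: "('a set \<Rightarrow> real) \<Rightarrow> 'a set set \<Rightarrow> ('a set \<Rightarrow> real) \<Rightarrow> 'a set \<Rightarrow> real" where
  "diff_weight wK H wH F = wK F - (if F \<in> H then wH F else 0)"

definition normalizing :: "'a set set \<Rightarrow> ('a set \<Rightarrow> real) \<Rightarrow> bool" where
  "normalizing S w \<longleftrightarrow> (\<forall>v \<in> vertices S. edges_at S v \<noteq> {} \<longrightarrow>
      w {v} = (\<Sum>e\<in>edges_at S v. w e))"

text \<open>The up Laplacian \<delta>0* \<delta>0 on vertex functions. For an edge e containing v, with
  other endpoint u, sgn(v,\<partial>e) \<cdot> (\<delta>0 f)(e) = f v - f u, independent of the orientation.\<close>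
definition lap_up0 :: "'a set set \<Rightarrow> ('a set \<Rightarrow> real) \<Rightarrow> ('a \<Rightarrow> real) \<Rightarrow> 'a \<Rightarrow> real" where
  "lap_up0 S w f v = (if w {v} = 0 then 0 else
     (\<Sum>e\<in>edges_at S v. w e / w {v} * (f v - f (the_elem (e - {v})))))"

definition lap_matrix :: "'n::finite set set \<Rightarrow> ('n set \<Rightarrow> real) \<Rightarrow> real^'n^'n" where
  "lap_matrix S w = (\<chi> v u. lap_up0 S w (\<lambda>x. if x = u then 1 else 0) v)"

definition charpoly :: "real^'n::finite^'n \<Rightarrow> real poly" where
  "charpoly A = det (\<chi> i j. (if i = j then [:0, 1:] else 0) - [:A $ i $ j:])"

definition sorted_eigenvalues :: "real^'n::finite^'n \<Rightarrow> real list \<Rightarrow> bool" where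
  "sorted_eigenvalues A ls \<longleftrightarrow> length ls = CARD('n) \<and> sorted ls \<and>
     charpoly A = (\<Prod>x\<leftarrow>ls. [:- x, 1:])"

definition eig_ext :: "real list \<Rightarrow> int \<Rightarrow> real" where
  "eig_ext ls j = (if j \<le> 0 then 0 else if nat j > length ls then 2 else ls ! (nat j - 1))"

text \<open>Number of connected components of the graph underlying a complex (= dim H^0).\<close>
definition num_components :: "'a set set \<Rightarrow> nat" where
  "num_components S = card (vertices S //
     {(u, v). u \<in> vertices S \<and> v \<in> vertices S \<and>
        (u, v) \<in> {(x, y). {x, y} \<in> S \<and> x \<noteq> y}\<^sup>*})"

end

theory Submission
  imports Defs
begin

(* Both Laplacians are similar, via D^(1/2) with D = diag (w {v}), to symmetric matrices whose
  Rayleigh quotients at x are the energies sum_e w e (f u - f v)^2 of f = D^(-1/2) x divided by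
  |x|^2, so the Courant-Fischer min-max principle compares their spectra.  Vectors vanishing on
  the vertices of H have the same energy for K and L and form a subspace of codimension at most
  |V(H)|; this gives theta_k <= lambda_(k + |V(H)|).  Conversely, the vectors that on every
  component of H are a multiple of D_L^(1/2) 1 form a subspace of codimension |V(H)| - c(H).
  Replacing D_L^(1/2) 1 by D_K^(1/2) 1 there does not decrease norms and preserves the energy,
  since f is then constant along the edges of H on both sides and the weights agree elsewhere;
  this gives lambda_(k - |V(H)| + c(H)) <= theta_k. *)

section \<open>Spectral theorem for real symmetric matrices\<close>

lemma symmetric_matrix_inner_commute:
  fixes S :: "real^'n^'n"
  assumes "transpose S = S"
  shows "(S *v x) \<bullet> y = x \<bullet> (S *v y)"
proof -
  have "x \<bullet> (S *v y) = (x v* S) \<bullet> y" by (simp add: dot_lmul_matrix)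
  also have "x v* S = S *v x" by (metis assms vector_transpose_matrix)
  finally show ?thesis by simp
qed

lemma quadratic_nonneg_imp_linear_coeff_zero:
  fixes r b :: real
  assumes "\<And>t. 2 * t * b + t\<^sup>2 * r \<ge> 0" "r \<ge> 0"
  shows "b = 0"
proof -
  define c where "c = r + 1"
  have c: "c > 0" using assms(2) c_def by simp
  have r: "r = c - 1" using c_def by simp
  have "2 * (- b / c) * b + (- b / c)\<^sup>2 * r = - (b\<^sup>2 * (r + 2)) / c\<^sup>2"
    using c unfolding r by (simp add: field_simps power2_eq_square)
  then have "- (b\<^sup>2 * (r + 2)) / c\<^sup>2 \<ge> 0" using assms(1)[of "- b / c"] by simp
  then have "b\<^sup>2 * (r + 2) \<le> 0" using c by (simp add: divide_le_0_iff)
  then show ?thesis using assms(2) by (simp add: mult_le_0_iff)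
qed

text \<open>A maximiser of the Rayleigh quotient on the unit sphere of an invariant subspace is an
  eigenvector: the first variation along every direction of the subspace vanishes.\<close>

lemma symmetric_matrix_invariant_subspace_eigenvector:
  fixes S :: "real^'n^'n"
  assumes sym: "transpose S = S" and W: "subspace W" and inv: "\<forall>x\<in>W. S *v x \<in> W"
    and ne: "W \<noteq> {0}"
  shows "\<exists>x\<in>W. norm x = 1 \<and> S *v x = (x \<bullet> (S *v x)) *\<^sub>R x"
proof -
  let ?q = "\<lambda>x. x \<bullet> (S *v x)"
  have cpt: "compact (W \<inter> sphere 0 1)"
    using compact_Int_closed[OF compact_sphere closed_subspace[OF W]] by (simp add: Int_commute)
  obtain y where y: "y \<in> W" "y \<noteq> 0" using ne W subspace_0 by blast
  have "y /\<^sub>R norm y \<in> W \<inter> sphere 0 1" using y W by (simp add: subspace_scale)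
  then have nonempty: "W \<inter> sphere 0 1 \<noteq> {}" by blast
  have cont: "continuous_on (W \<inter> sphere 0 1) ?q"
    by (intro continuous_intros linear_continuous_on matrix_vector_mul_linear)
  obtain x where x: "x \<in> W \<inter> sphere 0 1" and xmax: "\<forall>z\<in>W \<inter> sphere 0 1. ?q z \<le> ?q x"
    using continuous_attains_sup[OF cpt nonempty cont] by blast
  define \<mu> where "\<mu> = ?q x"
  have nx: "norm x = 1" using x by simp
  have xx: "x \<bullet> x = 1" using nx by (simp add: dot_square_norm)
  have gap_nonneg: "\<mu> * (z \<bullet> z) - ?q z \<ge> 0" if "z \<in> W" for z
  proof (cases "z = 0")
    case False
    let ?u = "z /\<^sub>R norm z"
    have "?u \<in> W \<inter> sphere 0 1" using that False W by (simp add: subspace_scale)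
    then have "?q ?u \<le> \<mu>" using xmax \<mu>_def by blast
    moreover have "?q ?u = ?q z / (norm z)\<^sup>2"
      by (simp add: matrix_vector_mult_scaleR power2_eq_square divide_inverse inverse_mult_distrib)
    moreover have "z \<bullet> z = (norm z)\<^sup>2" by (simp add: dot_square_norm)
    ultimately show ?thesis using False by (simp add: divide_le_eq)
  qed simp
  have residual_orth: "(\<mu> *\<^sub>R x - S *v x) \<bullet> z = 0" if "z \<in> W" for z
  proof (rule quadratic_nonneg_imp_linear_coeff_zero)
    show "\<mu> * (z \<bullet> z) - ?q z \<ge> 0" using gap_nonneg that .
    fix t
    have "x + t *\<^sub>R z \<in> W" using x that W by (metis IntD1 subspace_add subspace_scale)
    then have "\<mu> * ((x + t *\<^sub>R z) \<bullet> (x + t *\<^sub>R z)) - ?q (x + t *\<^sub>R z) \<ge> 0"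
      using gap_nonneg by blast
    moreover have "\<mu> * ((x + t *\<^sub>R z) \<bullet> (x + t *\<^sub>R z)) - ?q (x + t *\<^sub>R z)
        = (\<mu> * (x \<bullet> x) - ?q x) + 2 * t * ((\<mu> *\<^sub>R x - S *v x) \<bullet> z) + t\<^sup>2 * (\<mu> * (z \<bullet> z) - ?q z)"
      using symmetric_matrix_inner_commute[OF sym, of z x]
      by (simp add: matrix_vector_right_distrib matrix_vector_mult_scaleR inner_add_left
          inner_add_right algebra_simps power2_eq_square inner_commute)
    moreover have "\<mu> * (x \<bullet> x) - ?q x = 0" using xx \<mu>_def by simp
    ultimately show "2 * t * ((\<mu> *\<^sub>R x - S *v x) \<bullet> z) + t\<^sup>2 * (\<mu> * (z \<bullet> z) - ?q z) \<ge> 0"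
      by simp
  qed
  have "\<mu> *\<^sub>R x - S *v x \<in> W" using x inv W by (metis IntD1 subspace_diff subspace_scale)
  then have "(\<mu> *\<^sub>R x - S *v x) \<bullet> (\<mu> *\<^sub>R x - S *v x) = 0" using residual_orth by blast
  then have "S *v x = \<mu> *\<^sub>R x" by simp
  then show ?thesis using x nx \<mu>_def by blast
qed

lemma symmetric_matrix_invariant_subspace_eigenbasis:
  fixes S :: "real^'n^'n"
  assumes sym: "transpose S = S"
  shows "subspace W \<Longrightarrow> (\<forall>x\<in>W. S *v x \<in> W) \<Longrightarrow> dim W = n \<Longrightarrow>
    \<exists>B\<subseteq>W. finite B \<and> card B = n \<and> pairwise orthogonal B \<and>
      (\<forall>b\<in>B. norm b = 1 \<and> S *v b = (b \<bullet> (S *v b)) *\<^sub>R b)"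
proof (induction n arbitrary: W)
  case 0
  then show ?case by (intro exI[of _ "{}"]) auto
next
  case (Suc n)
  have "W \<noteq> {0}" using Suc.prems(3) by auto
  then obtain x where x: "x \<in> W" "norm x = 1" "S *v x = (x \<bullet> (S *v x)) *\<^sub>R x"
    using symmetric_matrix_invariant_subspace_eigenvector[OF sym Suc.prems(1,2)] by blast
  have xx: "x \<bullet> x = 1" using x(2) by (simp add: dot_square_norm)
  define W' where "W' = {y\<in>W. x \<bullet> y = 0}"
  have sW': "subspace W'" using Suc.prems(1) unfolding W'_def subspace_def
    by (auto simp: inner_add_right)
  have iW': "\<forall>y\<in>W'. S *v y \<in> W'"
  proof
    fix y assume y: "y \<in> W'"
    have "x \<bullet> (S *v y) = (S *v x) \<bullet> y" using symmetric_matrix_inner_commute[OF sym] by simp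
    also have "\<dots> = 0" using y x(3) unfolding W'_def by (metis (mono_tags) inner_scaleR_left
          mem_Collect_eq mult_zero_right)
    finally show "S *v y \<in> W'" using y Suc.prems(2) unfolding W'_def by auto
  qed
  have sum_eq: "{a + b |a b. a \<in> W' \<and> b \<in> span {x}} = W"
  proof (intro equalityI subsetI)
    fix z assume "z \<in> {a + b |a b. a \<in> W' \<and> b \<in> span {x}}"
    then obtain a b where "z = a + b" "a \<in> W'" "b \<in> span {x}" by blast
    moreover have "span {x} \<subseteq> W" using x(1) Suc.prems(1) by (simp add: span_minimal)
    ultimately show "z \<in> W" using Suc.prems(1) unfolding W'_def by (auto intro: subspace_add)
  next
    fix z assume z: "z \<in> W"
    have "z - (x \<bullet> z) *\<^sub>R x \<in> W'" unfolding W'_def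
      using z x(1) Suc.prems(1) xx by (auto simp: subspace_diff subspace_scale inner_diff_right)
    moreover have "(x \<bullet> z) *\<^sub>R x \<in> span {x}" by (simp add: span_base span_scale)
    ultimately show "z \<in> {a + b |a b. a \<in> W' \<and> b \<in> span {x}}"
      by (intro CollectI exI[of _ "z - (x \<bullet> z) *\<^sub>R x"] exI[of _ "(x \<bullet> z) *\<^sub>R x"]) auto
  qed
  have "W' \<inter> span {x} \<subseteq> {0}"
  proof
    fix z assume z: "z \<in> W' \<inter> span {x}"
    then obtain c where c: "z = c *\<^sub>R x" by (auto simp: span_singleton)
    then have "c = 0" using z xx unfolding W'_def by (simp add: inner_scaleR_right)
    then show "z \<in> {0}" using c by simp
  qed
  then have "dim (W' \<inter> span {x}) = 0" by simp
  moreover have "dim W + dim (W' \<inter> span {x}) = dim W' + dim (span {x})"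
    using dim_sums_Int[OF sW' subspace_span[of "{x}"]] sum_eq by simp
  moreover have "dim (span {x}) = 1" using x(2) by auto
  ultimately have "dim W' = n" using Suc.prems(3) by linarith
  then obtain B' where B': "B' \<subseteq> W'" "finite B'" "card B' = n" "pairwise orthogonal B'"
      "\<forall>b\<in>B'. norm b = 1 \<and> S *v b = (b \<bullet> (S *v b)) *\<^sub>R b"
    using Suc.IH[OF sW' iW'] by blast
  have "x \<notin> B'" using B'(1) xx unfolding W'_def by auto
  moreover have "\<forall>b\<in>B'. orthogonal x b \<and> orthogonal b x"
    using B'(1) unfolding W'_def orthogonal_def by (auto simp: inner_commute)
  ultimately show ?case
    using B' x W'_def by (intro exI[of _ "insert x B'"]) (auto simp: pairwise_insert)
qed

locale orthonormal_eigenbasis =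
  fixes S :: "real^'n::finite^'n" and b :: "'n \<Rightarrow> real^'n" and \<mu> :: "'n \<Rightarrow> real"
  assumes orthonormal: "\<And>i j. b i \<bullet> b j = (if i = j then 1 else 0)"
    and eigen: "\<And>i. S *v b i = \<mu> i *\<^sub>R b i"
begin

lemma inj_basis: "inj b"
  by (metis injI orthonormal zero_neq_one)

lemma pairwise_orthogonal_basis: "pairwise orthogonal (b ` J)"
  unfolding pairwise_def orthogonal_def using orthonormal by auto

lemma independent_basis: "independent (b ` J)"
proof (rule pairwise_orthogonal_independent[OF pairwise_orthogonal_basis])
  show "0 \<notin> b ` J" using orthonormal by (metis imageE inner_zero_left zero_neq_one)
qed

lemma dim_span_basis: "dim (span (b ` J)) = card J"
  using dim_span_eq_card_independent[OF independent_basis] inj_basis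
  by (simp add: card_image inj_on_subset)

lemma span_basis_UNIV: "span (range b) = UNIV"
  using dim_span_basis[of UNIV] dim_eq_full[of "range b"] by simp

lemma basis_expansion: "x = (\<Sum>i\<in>UNIV. (x \<bullet> b i) *\<^sub>R b i)"
proof -
  have "(\<Sum>c\<in>range b. (x \<bullet> c) *\<^sub>R c) = x"
    using orthonormal span_basis_UNIV
    by (intro orthonormal_basis_expand pairwise_orthogonal_basis) (auto simp: norm_eq_1)
  then show ?thesis by (simp add: sum.reindex[OF inj_basis])
qed

lemma coord_span_basis_zero:
  assumes "x \<in> span (b ` J)" "i \<notin> J"
  shows "x \<bullet> b i = 0"
proof -
  have "\<forall>y\<in>b ` J. orthogonal (b i) y" using orthonormal assms(2) by (auto simp: orthogonal_def)
  then have "orthogonal (b i) x" using orthogonal_to_span[OF assms(1)] by blast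
  then show ?thesis by (simp add: orthogonal_def inner_commute)
qed

lemma inner_self_expansion: "x \<bullet> x = (\<Sum>i\<in>UNIV. (x \<bullet> b i)\<^sup>2)"
proof -
  have "x \<bullet> x = x \<bullet> (\<Sum>i\<in>UNIV. (x \<bullet> b i) *\<^sub>R b i)" by (subst (2) basis_expansion) simp
  then show ?thesis by (simp add: inner_sum_right power2_eq_square)
qed

lemma rayleigh_expansion: "x \<bullet> (S *v x) = (\<Sum>i\<in>UNIV. \<mu> i * (x \<bullet> b i)\<^sup>2)"
proof -
  have "S *v x = (\<Sum>i\<in>UNIV. ((x \<bullet> b i) * \<mu> i) *\<^sub>R b i)"
    by (subst basis_expansion) (simp add: vec.sum matrix_vector_mult_scaleR eigen)
  then show ?thesis by (simp add: inner_sum_right power2_eq_square mult_ac)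
qed

end

lemma symmetric_matrix_orthonormal_eigenbasis:
  fixes S :: "real^'n::finite^'n"
  assumes "transpose S = S"
  obtains b \<mu> where "orthonormal_eigenbasis S b \<mu>"
proof -
  obtain B where B: "finite B" "card B = CARD('n)" "pairwise orthogonal B"
      "\<forall>b\<in>B. norm b = 1 \<and> S *v b = (b \<bullet> (S *v b)) *\<^sub>R b"
    using symmetric_matrix_invariant_subspace_eigenbasis[OF assms, of UNIV "CARD('n)"] by auto
  obtain f where "bij_betw f (UNIV::'n set) B"
    using finite_same_card_bij[of "UNIV::'n set" B] B(1,2) by auto
  then have inj: "inj f" and im: "range f = B" by (auto simp: bij_betw_def)
  have "f i \<bullet> f j = (if i = j then 1 else 0)" for i j
  proof (cases "i = j")
    case True
    then show ?thesis using B(4) im by (auto simp: dot_square_norm)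
  next
    case False
    then have "f i \<noteq> f j" using inj by (meson injD)
    then show ?thesis using B(3) im False unfolding pairwise_def orthogonal_def by auto
  qed
  moreover have "S *v f i = (f i \<bullet> (S *v f i)) *\<^sub>R f i" for i using B(4) im by auto
  ultimately show thesis by (intro that[of f "\<lambda>i. f i \<bullet> (S *v f i)"]) (unfold_locales; simp)
qed

section \<open>Characteristic polynomials and the Courant--Fischer theorem\<close>

lemma prod_linear_factors_eq_imp_mset_eq:
  fixes A B :: "real multiset"
  shows "(\<Prod>x\<in>#A. [:- x, 1:]) = (\<Prod>x\<in>#B. [:- x, 1:]) \<Longrightarrow> A = B"
proof (induction A arbitrary: B)
  case empty
  show ?case
  proof (rule ccontr)
    assume "{#} \<noteq> B"
    then obtain b where "b \<in># B" by (metis multiset_nonemptyE)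
    then have "poly (\<Prod>x\<in>#B. [:- x, 1:]) b = 0" by (auto simp: poly_prod_mset prod_mset_zero_iff)
    then show False using empty by simp
  qed
next
  case (add a A)
  have "poly (\<Prod>x\<in>#B. [:- x, 1:]) a = 0" unfolding add.prems[symmetric] by simp
  then have "a \<in># B" by (auto simp: poly_prod_mset prod_mset_zero_iff)
  then obtain B' where B: "B = add_mset a B'" by (metis mset_add)
  have "[:- a, 1:] * (\<Prod>x\<in>#A. [:- x, 1:]) = [:- a, 1:] * (\<Prod>x\<in>#B'. [:- x, 1:])"
    using add.prems unfolding B by simp
  then have "(\<Prod>x\<in>#A. [:- x, 1:]) = (\<Prod>x\<in>#B'. [:- x, 1:])" by (simp del: mult_pCons_left)
  then show ?case using add.IH B by simp
qed

lemma poly_charpoly: "poly (charpoly A) y = det (\<chi> i j. (if i = j then y else 0) - A$i$j)"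
proof -
  have poly_det: "poly (det P) y = det (\<chi> i j. poly (P$i$j) y)" for P :: "real poly^'n^'n"
    by (simp add: det_def poly_sum poly_prod)
  show ?thesis
    unfolding charpoly_def poly_det by (intro arg_cong[where f = det]) (auto simp: vec_eq_iff)
qed

lemma det_diagonal_scaling:
  fixes M :: "real^'n^'n"
  shows "det (\<chi> i j. c i * M$i$j * d j) = (\<Prod>i\<in>UNIV. c i) * (\<Prod>i\<in>UNIV. d i) * det M"
proof -
  have rows: "(\<chi> i j. c i * M$i$j * d j) = (\<chi> i. c i *s (\<chi> j. M$i$j * d j))"
    by (simp add: vec_eq_iff mult.assoc)
  have cols: "det (\<chi> i j. M$i$j * d j) = det (\<chi> j. d j *s (\<chi> i. M$i$j))"
    by (subst det_transpose[symmetric]) (simp add: transpose_def vec_eq_iff mult.commute)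
  have "det (\<chi> j i. M$i$j) = det M"
    by (subst det_transpose[symmetric]) (simp add: transpose_def)
  then show ?thesis unfolding rows det_rows_mul cols by simp
qed

lemma charpoly_diagonal_similar:
  fixes L S :: "real^'n^'n"
  assumes nz: "\<forall>i. e i \<noteq> 0" and rel: "\<forall>i j. L$i$j * e i = S$i$j * e j"
  shows "charpoly L = charpoly S"
proof -
  have "poly (charpoly L) y = poly (charpoly S) y" for y
  proof -
    have "(if i = j then y else 0) - L$i$j = (1 / e i) * ((if i = j then y else 0) - S$i$j) * e j"
      for i j using nz rel by (auto simp: field_simps)
    then have "det (\<chi> i j. (if i = j then y else 0) - L$i$j)
        = (\<Prod>i\<in>UNIV. 1 / e i) * (\<Prod>i\<in>UNIV. e i) * det (\<chi> i j. (if i = j then y else 0) - S$i$j)"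
      by (simp add: det_diagonal_scaling[symmetric])
    also have "(\<Prod>i\<in>UNIV. 1 / e i) * (\<Prod>i\<in>UNIV. e i) = 1"
      using nz by (simp add: prod.distrib[symmetric])
    finally show ?thesis by (simp add: poly_charpoly)
  qed
  then show ?thesis by (simp add: poly_eq_poly_eq_iff[symmetric] fun_eq_iff)
qed

lemma length_filter_ge_nth_sorted:
  fixes ls :: "'a::linorder list"
  assumes "sorted ls" "1 \<le> m" "m \<le> length ls"
  shows "length ls - m + 1 \<le> length (filter (\<lambda>x. ls!(m-1) \<le> x) ls)"
proof -
  have "{m-1..<length ls} \<subseteq> {i. i < length ls \<and> ls!(m-1) \<le> ls!i}"
    using assms sorted_nth_mono[OF assms(1)] by fastforce
  then have "card {m-1..<length ls} \<le> card {i. i < length ls \<and> ls!(m-1) \<le> ls!i}"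
    by (intro card_mono) auto
  then show ?thesis using assms by (simp add: length_filter_conv_card)
qed

lemma length_filter_le_nth_sorted:
  fixes ls :: "'a::linorder list"
  assumes "sorted ls" "1 \<le> m" "m \<le> length ls"
  shows "m \<le> length (filter (\<lambda>x. x \<le> ls!(m-1)) ls)"
proof -
  have "{0..<m} \<subseteq> {i. i < length ls \<and> ls!i \<le> ls!(m-1)}"
    using assms sorted_nth_mono[OF assms(1)] by fastforce
  then have "card {0..<m} \<le> card {i. i < length ls \<and> ls!i \<le> ls!(m-1)}"
    by (intro card_mono) auto
  then show ?thesis using assms by (simp add: length_filter_conv_card)
qed

context orthonormal_eigenbasis
begin

lemma det_char_matrix: "det (\<chi> i j. (if i = j then y else 0) - S$i$j) = (\<Prod>i\<in>UNIV. y - \<mu> i)"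
proof -
  define Q :: "real^'n^'n" where "Q = (\<chi> i j. b j $ i)"
  define M :: "real^'n^'n" where "M = (\<chi> i j. (if i = j then y else 0) - S$i$j)"
  have Mv: "M *v v = y *\<^sub>R v - S *v v" for v
  proof -
    have "((if i = j then y else 0) - S$i$j) * v$j = (if i = j then y * v$j else 0) - S$i$j * v$j"
      for i j by (simp add: left_diff_distrib)
    then show ?thesis by (simp add: M_def vec_eq_iff matrix_vector_mult_def sum_subtractf)
  qed
  have entry: "(transpose Q ** N ** Q) $ i $ j = b i \<bullet> (N *v b j)" for N i j
    by (simp add: Q_def matrix_matrix_mult_def matrix_vector_mult_def transpose_def inner_vec_def
        sum_distrib_left mult_ac) (rule sum.swap)
  have "(transpose Q ** Q) $ i $ j = b i \<bullet> b j" for i j using entry[of "mat 1" i j] by simp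
  then have "transpose Q ** Q = mat 1" by (simp add: vec_eq_iff orthonormal mat_def)
  then have "det Q * det Q = 1" by (metis det_I det_mul det_transpose)
  moreover have "transpose Q ** M ** Q = (\<chi> i j. if i = j then y - \<mu> j else 0)"
    by (simp add: vec_eq_iff entry Mv eigen inner_diff_right orthonormal)
  then have "det (transpose Q ** M ** Q) = (\<Prod>i\<in>UNIV. y - \<mu> i)"
    by (simp add: det_diagonal)
  moreover have "det (transpose Q ** M ** Q) = det M * (det Q * det Q)" by (simp add: det_mul)
  ultimately show ?thesis by (simp add: M_def)
qed

lemma charpoly_eq_prod_eigenvalues: "charpoly S = (\<Prod>i\<in>UNIV. [:- \<mu> i, 1:])"
  by (simp add: poly_eq_poly_eq_iff[symmetric] fun_eq_iff poly_charpoly det_char_matrix poly_prod)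

lemma mset_sorted_eigenvalues:
  assumes "sorted_eigenvalues S ls"
  shows "mset ls = image_mset \<mu> (mset_set UNIV)"
proof (rule prod_linear_factors_eq_imp_mset_eq)
  have "(\<Prod>x\<leftarrow>ls. [:- x, 1:]) = (\<Prod>i\<in>UNIV. [:- \<mu> i, 1:])"
    using assms charpoly_eq_prod_eigenvalues by (simp add: sorted_eigenvalues_def)
  then show "(\<Prod>x\<in>#mset ls. [:- x, 1:]) = (\<Prod>x\<in>#image_mset \<mu> (mset_set UNIV). [:- x, 1:])"
    by (simp add: prod_mset_prod_list[symmetric] prod_unfold_prod_mset image_mset.compositionality
        o_def)
qed

lemma length_filter_sorted_eigenvalues:
  assumes "sorted_eigenvalues S ls"
  shows "length (filter P ls) = card {i. P (\<mu> i)}"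
proof -
  have "length (filter P ls) = size (filter_mset P (mset ls))" by (metis mset_filter size_mset)
  also have "\<dots> = card {i. P (\<mu> i)}"
    by (simp add: mset_sorted_eigenvalues[OF assms] filter_mset_image_mset filter_mset_mset_set)
  finally show ?thesis .
qed

end

lemma eigenvalue_is_rayleigh_value:
  fixes S :: "real^'n::finite^'n"
  assumes "transpose S = S" "sorted_eigenvalues S ls" "t \<in> set ls"
  shows "\<exists>x. x \<bullet> x = 1 \<and> t = x \<bullet> (S *v x)"
proof -
  obtain b \<mu> where "orthonormal_eigenbasis S b \<mu>"
    using symmetric_matrix_orthonormal_eigenbasis[OF assms(1)] .
  then interpret orthonormal_eigenbasis S b \<mu> .
  have "t \<in># image_mset \<mu> (mset_set UNIV)"
    using assms(3) mset_sorted_eigenvalues[OF assms(2)] by (metis set_mset_mset)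
  then obtain i where "t = \<mu> i" by auto
  then show ?thesis using orthonormal eigen by (intro exI[of _ "b i"]) auto
qed

lemma dim_Int_lower_bound:
  fixes U W :: "(real^'n) set"
  assumes "subspace U" "subspace W"
  shows "dim U + dim W \<le> dim (U \<inter> W) + CARD('n)"
  using dim_sums_Int[OF assms] dim_subset_UNIV_cart[of "{x + y |x y. x \<in> U \<and> y \<in> W}"] by linarith

lemma eigenvalue_le_if_rayleigh_bounded:
  fixes S :: "real^'n::finite^'n"
  assumes "transpose S = S" "sorted_eigenvalues S ls"
    and W: "subspace W" and m: "1 \<le> m" "m \<le> dim W"
    and bound: "\<forall>x\<in>W. x \<bullet> (S *v x) \<le> t * (x \<bullet> x)"
  shows "ls!(m-1) \<le> t"
proof -
  obtain b \<mu> where "orthonormal_eigenbasis S b \<mu>"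
    using symmetric_matrix_orthonormal_eigenbasis[OF assms(1)] .
  then interpret orthonormal_eigenbasis S b \<mu> .
  define J where "J = {i. ls!(m-1) \<le> \<mu> i}"
  have dim_W: "dim W \<le> CARD('n)" by (rule dim_subset_UNIV_cart)
  have "CARD('n) - m + 1 \<le> card J"
    using length_filter_ge_nth_sorted[of ls m] m dim_W assms(2)
      length_filter_sorted_eigenvalues[OF assms(2), of "\<lambda>x. ls!(m-1) \<le> x"]
    unfolding J_def sorted_eigenvalues_def by simp
  then have "dim (W \<inter> span (b ` J)) \<noteq> 0"
    using dim_Int_lower_bound[OF W subspace_span[of "b ` J"]] dim_span_basis[of J] m dim_W by linarith
  then obtain x where x: "x \<in> W" "x \<in> span (b ` J)" "x \<noteq> 0"
    by (auto simp: dim_eq_0 subset_eq)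
  have "ls!(m-1) * (x \<bullet> x) = (\<Sum>i\<in>UNIV. ls!(m-1) * (x \<bullet> b i)\<^sup>2)"
    by (simp add: inner_self_expansion sum_distrib_left)
  also have "\<dots> \<le> (\<Sum>i\<in>UNIV. \<mu> i * (x \<bullet> b i)\<^sup>2)"
  proof (rule sum_mono)
    fix i
    show "ls!(m-1) * (x \<bullet> b i)\<^sup>2 \<le> \<mu> i * (x \<bullet> b i)\<^sup>2"
      using coord_span_basis_zero[OF x(2), of i]
        by (cases "i \<in> J") (auto simp: J_def intro: mult_right_mono)
  qed
  also have "\<dots> = x \<bullet> (S *v x)" by (simp add: rayleigh_expansion)
  also have "\<dots> \<le> t * (x \<bullet> x)" using bound x by blast
  finally show ?thesis using x(3) by simp
qed

lemma rayleigh_bounded_subspace_exists: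
  fixes S :: "real^'n::finite^'n"
  assumes "transpose S = S" "sorted_eigenvalues S ls" and m: "1 \<le> m" "m \<le> CARD('n)"
  shows "\<exists>W. subspace W \<and> m \<le> dim W \<and> (\<forall>x\<in>W. x \<bullet> (S *v x) \<le> ls!(m-1) * (x \<bullet> x))"
proof -
  obtain b \<mu> where "orthonormal_eigenbasis S b \<mu>"
    using symmetric_matrix_orthonormal_eigenbasis[OF assms(1)] .
  then interpret orthonormal_eigenbasis S b \<mu> .
  define J where "J = {i. \<mu> i \<le> ls!(m-1)}"
  have "m \<le> card J"
    using length_filter_le_nth_sorted[of ls m] m assms(2)
      length_filter_sorted_eigenvalues[OF assms(2), of "\<lambda>x. x \<le> ls!(m-1)"]
    unfolding J_def sorted_eigenvalues_def by simp
  moreover have "x \<bullet> (S *v x) \<le> ls!(m-1) * (x \<bullet> x)" if x: "x \<in> span (b ` J)" for x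
  proof -
    have "x \<bullet> (S *v x) = (\<Sum>i\<in>UNIV. \<mu> i * (x \<bullet> b i)\<^sup>2)" by (simp add: rayleigh_expansion)
    also have "\<dots> \<le> (\<Sum>i\<in>UNIV. ls!(m-1) * (x \<bullet> b i)\<^sup>2)"
    proof (rule sum_mono)
      fix i
      show "\<mu> i * (x \<bullet> b i)\<^sup>2 \<le> ls!(m-1) * (x \<bullet> b i)\<^sup>2"
        using coord_span_basis_zero[OF x, of i]
          by (cases "i \<in> J") (auto simp: J_def intro: mult_right_mono)
    qed
    also have "\<dots> = ls!(m-1) * (x \<bullet> x)" by (simp add: inner_self_expansion sum_distrib_left)
    finally show ?thesis .
  qed
  ultimately show ?thesis
    using dim_span_basis[of J] by (intro exI[of _ "span (b ` J)"]) auto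
qed

text \<open>A test subspace for the \<open>m\<close>-th eigenvalue of \<open>B\<close>, cut down to \<open>Y\<close> and pushed forward
  along \<open>\<Phi>\<close>, is one for the \<open>j\<close>-th eigenvalue of \<open>A\<close>.\<close>

lemma eigenvalue_le_via_linear_map:
  fixes A B :: "real^'n::finite^'n"
  assumes symA: "transpose A = A" and eigA: "sorted_eigenvalues A la"
    and symB: "transpose B = B" and eigB: "sorted_eigenvalues B lb"
    and Y: "subspace Y" and lin: "linear \<Phi>" and inj: "inj_on \<Phi> Y"
    and form: "\<forall>x\<in>Y. \<Phi> x \<bullet> (A *v \<Phi> x) = x \<bullet> (B *v x)"
    and norm: "\<forall>x\<in>Y. x \<bullet> x \<le> \<Phi> x \<bullet> \<Phi> x"
    and j: "1 \<le> j" "j + CARD('n) \<le> dim Y + m" and m: "m \<le> CARD('n)"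
    and nonneg: "0 \<le> lb!(m-1)"
  shows "la!(j-1) \<le> lb!(m-1)"
proof -
  have "dim Y \<le> CARD('n)" by (rule dim_subset_UNIV_cart)
  then have "1 \<le> m" using j by linarith
  then obtain U where U: "subspace U" "m \<le> dim U" "\<forall>x\<in>U. x \<bullet> (B *v x) \<le> lb!(m-1) * (x \<bullet> x)"
    using rayleigh_bounded_subspace_exists[OF symB eigB _ m] by blast
  define V where "V = U \<inter> Y"
  have V: "subspace V" unfolding V_def using U(1) Y by (rule subspace_inter)
  have "j \<le> dim V" using dim_Int_lower_bound[OF U(1) Y] U(2) j unfolding V_def by linarith
  moreover have "inj_on \<Phi> V" using inj_on_subset[OF inj] by (simp add: V_def)
  then have "inj_on \<Phi> (span V)" using V by (metis span_eq_iff)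
  then have "dim (\<Phi> ` V) = dim V" by (rule dim_image_eq[OF lin])
  moreover have "y \<bullet> (A *v y) \<le> lb!(m-1) * (y \<bullet> y)" if "y \<in> \<Phi> ` V" for y
  proof -
    obtain x where x: "x \<in> U" "x \<in> Y" "y = \<Phi> x" using \<open>y \<in> \<Phi> ` V\<close> V_def by blast
    then have "y \<bullet> (A *v y) = x \<bullet> (B *v x)" using form by simp
    also have "\<dots> \<le> lb!(m-1) * (x \<bullet> x)" using U(3) x by blast
    also have "\<dots> \<le> lb!(m-1) * (y \<bullet> y)" using norm x nonneg by (simp add: mult_left_mono)
    finally show ?thesis .
  qed
  ultimately show ?thesis
    using eigenvalue_le_if_rayleigh_bounded[OF symA eigA linear_subspace_image[OF lin V] j(1)]
    by simp
qed

lemma dim_orthogonal_to_finite: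
  fixes F :: "(real^'n) set"
  assumes "finite F"
  shows "CARD('n) \<le> dim {x. \<forall>f\<in>F. orthogonal f x} + card F"
proof -
  have "{y \<in> UNIV. \<forall>x\<in>span F. orthogonal x y} = {x. \<forall>f\<in>F. orthogonal f x}"
    by (auto simp: span_base) (meson orthogonal_commute orthogonal_to_span)
  then have "dim {x. \<forall>f\<in>F. orthogonal f x} + dim (span F) = CARD('n)"
    using dim_subspace_orthogonal_to_vectors[of "span F" UNIV] by simp
  moreover have "dim (span F) \<le> card F" using dim_le_card'[OF assms] by simp
  ultimately show ?thesis by linarith
qed

section \<open>The normalized graph Laplacian\<close>

definition other_end :: "'a set \<Rightarrow> 'a \<Rightarrow> 'a" where
  "other_end e v = the_elem (e - {v})"

lemma edge_other_end:
  assumes "card e = 2" "v \<in> e"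
  shows "e = {v, other_end e v}" "other_end e v \<noteq> v" "other_end e v \<in> e"
    "other_end e (other_end e v) = v"
proof -
  obtain u where u: "e - {v} = {u}"
    using assms card_1_singleton_iff[of "e - {v}"] by (auto simp: card_Diff_singleton)
  then have u_def: "other_end e v = u" by (simp add: other_end_def)
  have e: "e = {v, u}" and uv: "u \<noteq> v" using u assms(2) by blast+
  then have "e - {u} = {v}" by blast
  then have "other_end e u = v" by (simp add: other_end_def)
  then show "other_end e (other_end e v) = v" by (simp add: u_def)
  show "e = {v, other_end e v}" "other_end e v \<noteq> v" "other_end e v \<in> e"
    unfolding u_def using e uv by auto
qed

lemma edges_at_other_end_iff:
  "(e \<in> edges_at K v \<and> other_end e v = u) \<longleftrightarrow> (e \<in> K \<and> e = {v, u} \<and> u \<noteq> v)"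
proof
  assume a: "e \<in> edges_at K v \<and> other_end e v = u"
  then have e: "card e = 2" "v \<in> e" "e \<in> K" and u: "other_end e v = u"
    by (auto simp: edges_at_def)
  have "e = {v, u}" using edge_other_end(1)[OF e(1,2)] unfolding u .
  moreover have "u \<noteq> v" using edge_other_end(2)[OF e(1,2)] unfolding u .
  ultimately show "e \<in> K \<and> e = {v, u} \<and> u \<noteq> v" using e(3) by blast
next
  assume a: "e \<in> K \<and> e = {v, u} \<and> u \<noteq> v"
  then have "e - {v} = {u}" by blast
  then have "other_end e v = u" by (simp add: other_end_def)
  moreover have "e \<in> edges_at K v" using a by (auto simp: edges_at_def)
  ultimately show "e \<in> edges_at K v \<and> other_end e v = u" by blast
qed

lemma edges_at_other_end:
  assumes "e \<in> edges_at K v"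
  shows "e \<in> edges_at K (other_end e v)"
proof -
  have "card e = 2" "v \<in> e" "e \<in> K" using assms by (auto simp: edges_at_def)
  then show ?thesis using edge_other_end(3) by (simp add: edges_at_def)
qed

lemma sum_edges_at_other_end:
  fixes K :: "'n::finite set set"
  shows "(\<Sum>v\<in>UNIV. \<Sum>e\<in>edges_at K v. h v e) = (\<Sum>v\<in>UNIV. \<Sum>e\<in>edges_at K v. h (other_end e v) e)"
proof -
  let ?flip = "\<lambda>(v, e). (other_end e v, e)"
  have flip: "?flip p \<in> Sigma UNIV (edges_at K)" "?flip (?flip p) = p"
    if "p \<in> Sigma UNIV (edges_at K)" for p
    using that edge_other_end(3,4) by (auto simp: edges_at_def)
  have "(\<Sum>v\<in>UNIV. \<Sum>e\<in>edges_at K v. h v e) = (\<Sum>(v, e)\<in>Sigma UNIV (edges_at K). h v e)"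
    by (rule sum.Sigma) auto
  also have "\<dots> = (\<Sum>(v, e)\<in>Sigma UNIV (edges_at K). h (other_end e v) e)"
    by (rule sum.reindex_bij_witness[of _ ?flip ?flip]) (use flip in auto)
  also have "\<dots> = (\<Sum>v\<in>UNIV. \<Sum>e\<in>edges_at K v. h (other_end e v) e)"
    by (rule sum.Sigma[symmetric]) auto
  finally show ?thesis .
qed

lemma lap_matrix_entry:
  "lap_matrix K w $ v $ u = (if w {v} = 0 then 0 else
     (\<Sum>e\<in>edges_at K v. w e / w {v} * ((if v = u then 1 else 0) - (if other_end e v = u then 1 else 0))))"
  by (simp add: lap_matrix_def lap_up0_def other_end_def)

text \<open>The symmetrisation \<open>D\<^sup>1\<^sup>/\<^sup>2 \<Delta> D\<^sup>-\<^sup>1\<^sup>/\<^sup>2\<close> of the up Laplacian, \<open>D = diag (w {v})\<close>;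
  rows and columns of vertices of weight \<open>0\<close> vanish because \<open>1 / 0 = 0\<close>.\<close>

definition sym_lap_matrix :: "'n::finite set set \<Rightarrow> ('n set \<Rightarrow> real) \<Rightarrow> real^'n^'n" where
  "sym_lap_matrix K w = (\<chi> v u. \<Sum>e\<in>edges_at K v. w e * ((if u = v then 1 / w {v} else 0) -
      (if other_end e v = u then 1 / (sqrt (w {v}) * sqrt (w {u})) else 0)))"

definition deg_scaled :: "('n set \<Rightarrow> real) \<Rightarrow> real^'n \<Rightarrow> 'n \<Rightarrow> real" where
  "deg_scaled w x v = x$v / sqrt (w {v})"

definition energy :: "'n::finite set set \<Rightarrow> ('n set \<Rightarrow> real) \<Rightarrow> real^'n \<Rightarrow> real" where
  "energy K w x = (\<Sum>v\<in>UNIV. \<Sum>e\<in>edges_at K v.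
     w e * ((deg_scaled w x v)\<^sup>2 - deg_scaled w x v * deg_scaled w x (other_end e v)))"

text \<open>The diagonal of \<open>D\<^sup>1\<^sup>/\<^sup>2\<close>, with weight-\<open>0\<close> vertices given the entry \<open>1\<close> to keep it invertible.\<close>

definition sqrt_weight :: "('n set \<Rightarrow> real) \<Rightarrow> 'n \<Rightarrow> real" where
  "sqrt_weight w v = (if w {v} > 0 then sqrt (w {v}) else 1)"

lemma sqrt_weight_pos: "sqrt_weight w v > 0"
  by (simp add: sqrt_weight_def)

locale weighted_graph =
  fixes K :: "'n::finite set set" and w :: "'n set \<Rightarrow> real"
  assumes nonneg: "\<forall>F\<in>K. w F \<ge> 0" and verts: "vertices K = UNIV" and normal: "normalizing K w"
begin

lemma vertex_weight_nonneg: "w {v} \<ge> 0"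
  using nonneg verts unfolding vertices_def by auto

lemma edge_weight_nonneg: "e \<in> edges_at K v \<Longrightarrow> w e \<ge> 0"
  using nonneg by (auto simp: edges_at_def)

lemma vertex_weight_eq_sum: "edges_at K v \<noteq> {} \<Longrightarrow> w {v} = (\<Sum>e\<in>edges_at K v. w e)"
  using normal verts unfolding normalizing_def by auto

lemma vertex_weight_pos:
  assumes "e \<in> edges_at K v" "w e \<noteq> 0"
  shows "w {v} > 0"
proof -
  have "w e \<le> (\<Sum>e\<in>edges_at K v. w e)"
    by (rule member_le_sum) (use assms edge_weight_nonneg in auto)
  moreover have "edges_at K v \<noteq> {}" using assms(1) by auto
  ultimately have "w e \<le> w {v}" using vertex_weight_eq_sum by simp
  then show ?thesis using assms(2) edge_weight_nonneg[OF assms(1)] by linarith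
qed

lemma other_end_weight_pos: "e \<in> edges_at K v \<Longrightarrow> w e \<noteq> 0 \<Longrightarrow> w {other_end e v} > 0"
  by (rule vertex_weight_pos[OF edges_at_other_end])

lemma lap_matrix_similar:
  "lap_matrix K w $ v $ u * sqrt_weight w v = sym_lap_matrix K w $ v $ u * sqrt_weight w u"
proof (cases "w {v} = 0")
  case True
  then show ?thesis by (simp add: lap_matrix_entry sym_lap_matrix_def cong: if_cong)
next
  case False
  then have wv: "w {v} > 0" using vertex_weight_nonneg[of v] by linarith
  have summand: "w e / w {v} * ((if v = u then 1 else 0) - (if other_end e v = u then 1 else 0))
        * sqrt_weight w v
      = w e * ((if u = v then 1 / w {v} else 0) -
          (if other_end e v = u then 1 / (sqrt (w {v}) * sqrt (w {u})) else 0)) * sqrt_weight w u"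
    if e: "e \<in> edges_at K v" for e
  proof -
    have ne: "other_end e v \<noteq> v" using e edge_other_end(2)[of e v] by (auto simp: edges_at_def)
    have sq: "sqrt (w {v}) * sqrt (w {v}) = w {v}" using wv by simp
    consider "u = v" | "u \<noteq> v" "other_end e v \<noteq> u" | "u \<noteq> v" "other_end e v = u" "w e = 0"
      | "u \<noteq> v" "other_end e v = u" "w {u} > 0"
      using other_end_weight_pos[OF e] by blast
    then show ?thesis
    proof cases
      case 1
      then show ?thesis using ne wv by (simp add: sqrt_weight_def field_simps)
    next
      case 4
      then show ?thesis using wv sq by (simp add: sqrt_weight_def field_simps)
    qed auto
  qed
  have "lap_matrix K w $ v $ u * sqrt_weight w v = (\<Sum>e\<in>edges_at K v.
      w e / w {v} * ((if v = u then 1 else 0) - (if other_end e v = u then 1 else 0)) * sqrt_weight w v)"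
    using False by (simp add: lap_matrix_entry sum_distrib_right)
  also have "\<dots> = (\<Sum>e\<in>edges_at K v. w e * ((if u = v then 1 / w {v} else 0) -
      (if other_end e v = u then 1 / (sqrt (w {v}) * sqrt (w {u})) else 0)) * sqrt_weight w u)"
    using summand by (rule sum.cong[OF refl])
  also have "\<dots> = sym_lap_matrix K w $ v $ u * sqrt_weight w u"
    by (simp add: sym_lap_matrix_def sum_distrib_right)
  finally show ?thesis .
qed

lemma sym_lap_matrix_off_diagonal:
  assumes "v \<noteq> u"
  shows "sym_lap_matrix K w $ v $ u = - (\<Sum>e\<in>{e\<in>K. e = {v, u}}. w e) / (sqrt (w {v}) * sqrt (w {u}))"
proof -
  have "sym_lap_matrix K w $ v $ u = (\<Sum>e\<in>edges_at K v.
      - (if other_end e v = u then w e / (sqrt (w {v}) * sqrt (w {u})) else 0))"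
    unfolding sym_lap_matrix_def vec_lambda_beta using assms by (intro sum.cong refl) auto
  also have "\<dots> = - (\<Sum>e\<in>{e\<in>edges_at K v. other_end e v = u}. w e / (sqrt (w {v}) * sqrt (w {u})))"
    by (simp add: sum_negf sum.inter_filter)
  also have "{e\<in>edges_at K v. other_end e v = u} = {e\<in>K. e = {v, u}}"
    using edges_at_other_end_iff[of _ K v u] assms by blast
  finally show ?thesis by (simp add: sum_divide_distrib)
qed

lemma sym_lap_matrix_symmetric: "transpose (sym_lap_matrix K w) = sym_lap_matrix K w"
proof -
  have "sym_lap_matrix K w $ u $ v = sym_lap_matrix K w $ v $ u" for u v
    by (cases "u = v") (simp_all add: sym_lap_matrix_off_diagonal insert_commute mult.commute)
  then show ?thesis by (simp add: transpose_def vec_eq_iff)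
qed

lemma sorted_eigenvalues_sym_lap_matrix:
  "sorted_eigenvalues (lap_matrix K w) ls \<longleftrightarrow> sorted_eigenvalues (sym_lap_matrix K w) ls"
proof -
  have "\<forall>i. sqrt_weight w i \<noteq> 0" using sqrt_weight_pos by (metis less_irrefl)
  then have "charpoly (lap_matrix K w) = charpoly (sym_lap_matrix K w)"
    using lap_matrix_similar by (intro charpoly_diagonal_similar) auto
  then show ?thesis by (simp add: sorted_eigenvalues_def)
qed

lemma sym_lap_matrix_mult: "(sym_lap_matrix K w *v x) $ v = (\<Sum>e\<in>edges_at K v.
    w e * (x$v / w {v} - x$(other_end e v) / (sqrt (w {v}) * sqrt (w {other_end e v}))))"
proof -
  have "(sym_lap_matrix K w *v x) $ v = (\<Sum>e\<in>edges_at K v. \<Sum>u\<in>UNIV.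
      w e * ((if u = v then 1 / w {v} else 0) -
        (if other_end e v = u then 1 / (sqrt (w {v}) * sqrt (w {u})) else 0)) * x$u)"
    by (simp add: matrix_vector_mult_def sym_lap_matrix_def sum_distrib_right sum.swap[of _ UNIV])
  also have "\<dots> = (\<Sum>e\<in>edges_at K v. \<Sum>u\<in>UNIV.
      (if u = v then w e * x$u / w {v} else 0) -
      (if other_end e v = u then w e * x$u / (sqrt (w {v}) * sqrt (w {u})) else 0))"
    by (intro sum.cong refl) (simp add: algebra_simps)
  finally show ?thesis by (simp add: sum_subtractf right_diff_distrib)
qed

lemma rayleigh_sym_lap_matrix: "x \<bullet> (sym_lap_matrix K w *v x) = energy K w x"
proof -
  have "x \<bullet> (sym_lap_matrix K w *v x) = (\<Sum>v\<in>UNIV. \<Sum>e\<in>edges_at K v.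
      x$v * (w e * (x$v / w {v} - x$(other_end e v) / (sqrt (w {v}) * sqrt (w {other_end e v})))))"
    by (simp add: inner_vec_def sym_lap_matrix_mult sum_distrib_left)
  also have "\<dots> = energy K w x" unfolding energy_def deg_scaled_def
  proof (intro sum.cong refl)
    fix v e
    have "(x$v / sqrt (w {v}))\<^sup>2 = x$v * x$v / w {v}"
      using vertex_weight_nonneg[of v] by (simp add: power_divide power2_eq_square)
    then show "x$v * (w e * (x$v / w {v} - x$(other_end e v) / (sqrt (w {v}) * sqrt (w {other_end e v})))) =
        w e * ((x$v / sqrt (w {v}))\<^sup>2 - x$v / sqrt (w {v}) * (x$(other_end e v) / sqrt (w {other_end e v})))"
      by (simp add: algebra_simps)
  qed
  finally show ?thesis .
qed

lemma energy_double:
  "2 * energy K w x = (\<Sum>v\<in>UNIV. \<Sum>e\<in>edges_at K v.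
     w e * (deg_scaled w x v - deg_scaled w x (other_end e v))\<^sup>2)"
proof -
  let ?g = "deg_scaled w x"
  have "energy K w x = (\<Sum>v\<in>UNIV. \<Sum>e\<in>edges_at K v.
      w e * ((?g (other_end e v))\<^sup>2 - ?g (other_end e v) * ?g (other_end e (other_end e v))))"
    unfolding energy_def by (rule sum_edges_at_other_end)
  also have "\<dots> = (\<Sum>v\<in>UNIV. \<Sum>e\<in>edges_at K v. w e * ((?g (other_end e v))\<^sup>2 - ?g (other_end e v) * ?g v))"
    by (intro sum.cong refl) (auto simp: edges_at_def edge_other_end(4))
  finally have "2 * energy K w x = (\<Sum>v\<in>UNIV. \<Sum>e\<in>edges_at K v.
      w e * ((?g v)\<^sup>2 - ?g v * ?g (other_end e v)) + w e * ((?g (other_end e v))\<^sup>2 - ?g (other_end e v) * ?g v))"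
    by (simp add: energy_def sum.distrib)
  also have "\<dots> = (\<Sum>v\<in>UNIV. \<Sum>e\<in>edges_at K v. w e * (?g v - ?g (other_end e v))\<^sup>2)"
    by (intro sum.cong refl) (simp add: power2_eq_square algebra_simps)
  finally show ?thesis .
qed

lemma energy_nonneg: "energy K w x \<ge> 0"
proof -
  have "0 \<le> (\<Sum>v\<in>UNIV. \<Sum>e\<in>edges_at K v. w e * (deg_scaled w x v - deg_scaled w x (other_end e v))\<^sup>2)"
    by (intro sum_nonneg mult_nonneg_nonneg edge_weight_nonneg) auto
  then show ?thesis using energy_double[of x] by simp
qed

lemma energy_le: "energy K w x \<le> 2 * (x \<bullet> x)"
proof -
  let ?g = "deg_scaled w x"
  let ?A = "\<Sum>v\<in>UNIV. \<Sum>e\<in>edges_at K v. w e * (?g v)\<^sup>2"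
  have "2 * energy K w x \<le> (\<Sum>v\<in>UNIV. \<Sum>e\<in>edges_at K v. w e * (2 * (?g v)\<^sup>2 + 2 * (?g (other_end e v))\<^sup>2))"
    unfolding energy_double
  proof (intro sum_mono mult_left_mono)
    show "(?g v - ?g (other_end e v))\<^sup>2 \<le> 2 * (?g v)\<^sup>2 + 2 * (?g (other_end e v))\<^sup>2" for v e
      by (smt (verit) power2_diff zero_le_power2 power2_sum)
  qed (rule edge_weight_nonneg)
  also have "\<dots> = 2 * ?A + 2 * (\<Sum>v\<in>UNIV. \<Sum>e\<in>edges_at K v. w e * (?g (other_end e v))\<^sup>2)"
    by (simp add: algebra_simps sum.distrib sum_distrib_left)
  also have "(\<Sum>v\<in>UNIV. \<Sum>e\<in>edges_at K v. w e * (?g (other_end e v))\<^sup>2) = ?A"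
    by (rule sum_edges_at_other_end[symmetric])
  finally have "energy K w x \<le> 2 * ?A" by simp
  moreover have "(\<Sum>e\<in>edges_at K v. w e * (?g v)\<^sup>2) \<le> (x$v)\<^sup>2" for v
  proof (cases "edges_at K v = {} \<or> w {v} = 0")
    case False
    then have "(\<Sum>e\<in>edges_at K v. w e * (?g v)\<^sup>2) = w {v} * (?g v)\<^sup>2"
      using vertex_weight_eq_sum by (simp add: sum_distrib_right)
    also have "\<dots> = (x$v)\<^sup>2"
      using False vertex_weight_nonneg[of v] by (simp add: deg_scaled_def power_divide)
    finally show ?thesis by simp
  qed (auto simp: deg_scaled_def)
  then have "?A \<le> x \<bullet> x" by (simp add: inner_vec_def power2_eq_square sum_mono)
  ultimately show ?thesis by linarith
qed

lemma eigenvalue_bounds: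
  assumes "sorted_eigenvalues (lap_matrix K w) ls" "t \<in> set ls"
  shows "0 \<le> t" "t \<le> 2"
proof -
  have "sorted_eigenvalues (sym_lap_matrix K w) ls"
    using assms(1) sorted_eigenvalues_sym_lap_matrix by simp
  then obtain x where x: "x \<bullet> x = 1" "t = x \<bullet> (sym_lap_matrix K w *v x)"
    using eigenvalue_is_rayleigh_value[OF sym_lap_matrix_symmetric _ assms(2)] by blast
  then show "0 \<le> t" "t \<le> 2" using energy_nonneg energy_le[of x] rayleigh_sym_lap_matrix by simp_all
qed

end

lemma equiv_representatives:
  assumes "equiv A R"
  obtains rep where "\<And>v. v \<in> A \<Longrightarrow> (v, rep v) \<in> R" "\<And>u v. (u, v) \<in> R \<Longrightarrow> rep u = rep v"
    "card (rep ` A) = card (A // R)"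
proof
  define pick where "pick C = (SOME r. r \<in> C)" for C :: "'a set"
  define rep where "rep v = pick (R `` {v})" for v
  show "(v, rep v) \<in> R" if "v \<in> A" for v
  proof -
    have "v \<in> R `` {v}" using assms that by (auto simp: equiv_def refl_on_def)
    then show ?thesis unfolding rep_def pick_def by (metis Image_singleton_iff someI)
  qed
  show "rep u = rep v" if "(u, v) \<in> R" for u v
    using equiv_class_eq[OF assms that] by (simp add: rep_def)
  have "inj_on pick (A // R)"
  proof (rule inj_onI)
    fix C D assume C: "C \<in> A // R" and D: "D \<in> A // R" and "pick C = pick D"
    moreover have "pick C \<in> C" "pick D \<in> D"
      using in_quotient_imp_non_empty[OF assms C] in_quotient_imp_non_empty[OF assms D]
      unfolding pick_def by (auto intro: someI_ex)
    ultimately show "C = D" using quotient_disj[OF assms C D] by auto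
  qed
  moreover have "rep ` A = pick ` (A // R)" by (auto simp: rep_def quotient_def)
  ultimately show "card (rep ` A) = card (A // R)" by (simp add: card_image)
qed

section \<open>Interlacing for a proper difference\<close>

locale proper_difference =
  fixes K H :: "'n::finite set set" and wK wH :: "'n set \<Rightarrow> real"
  assumes K_verts: "vertices K = UNIV"
    and wK_nonneg: "\<forall>F\<in>K. wK F \<ge> 0"
    and wH_nonneg: "\<forall>F\<in>H. wH F \<ge> 0"
    and sub: "weighted_subgraph H wH K wK"
    and normK: "normalizing K wK"
    and normL: "normalizing K (diff_weight wK H wH)"
begin

abbreviation "wL \<equiv> diff_weight wK H wH"
abbreviation "VH \<equiv> vertices H"

lemma wL_nonneg: "\<forall>F\<in>K. wL F \<ge> 0"
  using sub wK_nonneg by (auto simp: diff_weight_def weighted_subgraph_def)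

sublocale GK: weighted_graph K wK
  by unfold_locales (use wK_nonneg K_verts normK in auto)

sublocale GL: weighted_graph K wL
  by unfold_locales (use wL_nonneg K_verts normL in auto)

lemma wL_vertex_le: "wL {v} \<le> wK {v}"
  using wH_nonneg by (auto simp: diff_weight_def)

lemma wL_outside_VH: "v \<notin> VH \<Longrightarrow> wL {v} = wK {v}"
  by (simp add: diff_weight_def vertices_def)

lemma wL_outside_H: "e \<notin> H \<Longrightarrow> wL e = wK e"
  by (simp add: diff_weight_def)

lemma H_edge_endpoints:
  assumes "e \<in> H" "card e = 2" "v \<in> e"
  shows "v \<in> VH" "other_end e v \<in> VH"
proof -
  have closed: "G \<subseteq> e \<Longrightarrow> G \<noteq> {} \<Longrightarrow> G \<in> H" for G
    using sub assms(1) unfolding weighted_subgraph_def is_complex1_def by blast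
  show "v \<in> VH" using closed[of "{v}"] assms(3) by (simp add: vertices_def)
  show "other_end e v \<in> VH"
    using closed[of "{other_end e v}"] edge_other_end(3)[OF assms(2,3)] by (simp add: vertices_def)
qed

lemma energy_eq_if_vanishes_on_VH:
  assumes "\<forall>v\<in>VH. x $ v = 0"
  shows "energy K wL x = energy K wK x"
  unfolding energy_def
proof (intro sum.cong refl)
  fix v e assume "e \<in> edges_at K v"
  then have e: "card e = 2" "v \<in> e" by (auto simp: edges_at_def)
  have "deg_scaled wL x u = deg_scaled wK x u" for u
    using assms wL_outside_VH[of u] by (cases "u \<in> VH") (auto simp: deg_scaled_def)
  moreover have "deg_scaled wL x v = 0" "deg_scaled wL x (other_end e v) = 0" if "e \<in> H"
    using H_edge_endpoints[OF that e] assms by (auto simp: deg_scaled_def)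
  ultimately show "wL e * ((deg_scaled wL x v)\<^sup>2 - deg_scaled wL x v * deg_scaled wL x (other_end e v)) =
      wK e * ((deg_scaled wK x v)\<^sup>2 - deg_scaled wK x v * deg_scaled wK x (other_end e v))"
    using wL_outside_H[of e] by (cases "e \<in> H") auto
qed

lemma upper_interlacing:
  assumes eigK: "sorted_eigenvalues (lap_matrix K wK) lams"
    and eigL: "sorted_eigenvalues (lap_matrix K wL) thetas"
    and k: "1 \<le> k" "k \<le> CARD('n)"
  shows "thetas ! (k - 1) \<le> eig_ext lams (int k + int (card VH))"
proof (cases "k + card VH \<le> CARD('n)")
  case False
  have "thetas ! (k - 1) \<in> set thetas" using k eigL by (simp add: sorted_eigenvalues_def)
  then have "thetas ! (k - 1) \<le> 2" by (rule GL.eigenvalue_bounds[OF eigL])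
  then show ?thesis using False eigK
    by (simp add: eig_ext_def sorted_eigenvalues_def nat_add_distrib)
next
  case True
  define m where "m = k + card VH"
  define Y where "Y = {x::real^'n. \<forall>f\<in>(\<lambda>v. axis v 1) ` VH. orthogonal f x}"
  have "CARD('n) \<le> dim Y + card ((\<lambda>v. axis v (1::real)) ` VH)"
    unfolding Y_def by (rule dim_orthogonal_to_finite) simp
  then have dim_Y: "k + CARD('n) \<le> dim Y + m"
    using card_image_le[of VH "\<lambda>v. axis v (1::real)"] unfolding m_def by simp
  have "lams ! (m - 1) \<in> set lams" using True k eigK by (simp add: m_def sorted_eigenvalues_def)
  then have "0 \<le> lams ! (m - 1)" by (rule GK.eigenvalue_bounds[OF eigK])
  moreover have "x \<bullet> (sym_lap_matrix K wL *v x) = x \<bullet> (sym_lap_matrix K wK *v x)" if "x \<in> Y" for x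
    using that energy_eq_if_vanishes_on_VH[of x]
    by (simp add: Y_def orthogonal_def inner_axis' GL.rayleigh_sym_lap_matrix GK.rayleigh_sym_lap_matrix)
  moreover have "subspace Y" unfolding Y_def by (rule subspace_orthogonal_to_vectors)
  ultimately have "thetas ! (k - 1) \<le> lams ! (m - 1)"
    using eigenvalue_le_via_linear_map[OF GL.sym_lap_matrix_symmetric
        GL.sorted_eigenvalues_sym_lap_matrix[THEN iffD1, OF eigL] GK.sym_lap_matrix_symmetric
        GK.sorted_eigenvalues_sym_lap_matrix[THEN iffD1, OF eigK] _ linear_id, of Y k m]
      k True dim_Y by (simp add: m_def)
  then show ?thesis
    using True k eigK by (simp add: eig_ext_def sorted_eigenvalues_def nat_add_distrib m_def)
qed

end

locale component_representatives = proper_difference K H wK wH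
    for K H :: "'n::finite set set" and wK wH :: "'n set \<Rightarrow> real" +
  fixes rep :: "'n \<Rightarrow> 'n"
  assumes rep_in: "v \<in> vertices H \<Longrightarrow> rep v \<in> vertices H"
    and rep_idem: "v \<in> vertices H \<Longrightarrow> rep (rep v) = rep v"
    and rep_edge: "e \<in> H \<Longrightarrow> card e = 2 \<Longrightarrow> v \<in> e \<Longrightarrow> rep (other_end e v) = rep v"
    and card_rep: "card (rep ` vertices H) = num_components H"
begin

text \<open>\<open>aligned\<close> consists of the vectors that on each component of \<open>H\<close> are the multiple
  \<open>ratio x\<close> of \<open>sqrt_weight_L\<close>, and \<open>lift\<close> replaces that by the same multiple of \<open>sqrt_weight wK\<close>.
  Where \<open>wL {v} = 0\<close> the value of \<open>sqrt_weight_L\<close> does not affect the energy; it is chosen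
  \<open>\<le> sqrt_weight wK v\<close> so that lifting does not decrease norms.\<close>

definition sqrt_weight_L :: "'n \<Rightarrow> real" where
  "sqrt_weight_L v = (if wL {v} > 0 then sqrt (wL {v}) else sqrt_weight wK v)"

definition aligned :: "(real^'n) set" where
  "aligned = {x. \<forall>v\<in>VH. sqrt_weight_L (rep v) * x$v = sqrt_weight_L v * x$(rep v)}"

definition ratio :: "real^'n \<Rightarrow> 'n \<Rightarrow> real" where
  "ratio x v = x$(rep v) / sqrt_weight_L (rep v)"

definition lift :: "real^'n \<Rightarrow> real^'n" where
  "lift x = (\<chi> v. if v \<in> VH then sqrt_weight wK v * ratio x v else x$v)"

lemma sqrt_weight_L_pos: "sqrt_weight_L v > 0"
  by (simp add: sqrt_weight_L_def sqrt_weight_pos)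

lemma sqrt_weight_L_le: "sqrt_weight_L v \<le> sqrt_weight wK v"
  using wL_vertex_le[of v] by (auto simp: sqrt_weight_L_def sqrt_weight_def)

lemma num_components_le: "num_components H \<le> card VH"
  using card_rep card_image_le[of VH rep] by simp

lemma aligned_coord: "x \<in> aligned \<Longrightarrow> v \<in> VH \<Longrightarrow> x$v = sqrt_weight_L v * ratio x v"
  using sqrt_weight_L_pos[of "rep v"] by (simp add: aligned_def ratio_def field_simps)

lemma aligned_orthogonal:
  "aligned = {x. \<forall>f\<in>(\<lambda>v. sqrt_weight_L (rep v) *\<^sub>R axis v 1 - sqrt_weight_L v *\<^sub>R axis (rep v) 1)
      ` (VH - rep ` VH). orthogonal f x}"
  using rep_idem by (auto simp: aligned_def orthogonal_def inner_diff_left inner_axis')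

lemma subspace_aligned: "subspace aligned"
  unfolding aligned_orthogonal by (rule subspace_orthogonal_to_vectors)

lemma dim_aligned: "CARD('n) + num_components H \<le> dim aligned + card VH"
proof -
  let ?F = "(\<lambda>v. sqrt_weight_L (rep v) *\<^sub>R axis v 1 - sqrt_weight_L v *\<^sub>R axis (rep v) (1::real))
      ` (VH - rep ` VH)"
  have "CARD('n) \<le> dim aligned + card ?F"
    unfolding aligned_orthogonal by (rule dim_orthogonal_to_finite) simp
  moreover have "card ?F \<le> card (VH - rep ` VH)" by (rule card_image_le) simp
  also have "\<dots> = card VH - num_components H"
    using rep_in card_rep by (subst card_Diff_subset) auto
  ultimately show ?thesis using num_components_le by linarith
qed

lemma linear_lift: "linear lift"
  by (rule linearI) (auto simp: lift_def ratio_def vec_eq_iff add_divide_distrib algebra_simps)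

lemma inj_on_lift: "inj_on lift aligned"
  unfolding linear_inj_on_iff_eq_0[OF linear_lift subspace_aligned]
proof (intro ballI impI)
  fix x assume x: "x \<in> aligned" and "lift x = 0"
  have "x$v = 0" for v
  proof -
    have "lift x $ v = 0" using \<open>lift x = 0\<close> by simp
    then show ?thesis
      using aligned_coord[OF x, of v] sqrt_weight_pos[of wK v]
        by (auto simp: lift_def split: if_splits)
  qed
  then show "x = 0" by (simp add: vec_eq_iff)
qed

lemma norm_le_lift: "x \<in> aligned \<Longrightarrow> x \<bullet> x \<le> lift x \<bullet> lift x"
  unfolding inner_vec_def
proof (rule sum_mono)
  fix v assume x: "x \<in> aligned"
  show "x$v \<bullet> x$v \<le> lift x $ v \<bullet> lift x $ v"
  proof (cases "v \<in> VH")
    case True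
    have "sqrt_weight_L v * sqrt_weight_L v \<le> sqrt_weight wK v * sqrt_weight wK v"
      using sqrt_weight_L_le[of v] sqrt_weight_L_pos[of v] by (intro mult_mono) auto
    then have "sqrt_weight_L v * sqrt_weight_L v * (ratio x v * ratio x v)
        \<le> sqrt_weight wK v * sqrt_weight wK v * (ratio x v * ratio x v)"
      by (intro mult_right_mono) auto
    then show ?thesis using aligned_coord[OF x True] True by (simp add: lift_def mult_ac)
  qed (simp add: lift_def)
qed

lemma deg_scaled_lift:
  assumes x: "x \<in> aligned" and pos: "wK {u} > 0" "wL {u} > 0"
  shows "deg_scaled wK (lift x) u = deg_scaled wL x u"
proof (cases "u \<in> VH")
  case True
  then show ?thesis
    using aligned_coord[OF x True] pos
      by (simp add: deg_scaled_def lift_def sqrt_weight_def sqrt_weight_L_def)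
next
  case False
  then show ?thesis using wL_outside_VH[OF False] by (simp add: deg_scaled_def lift_def)
qed

lemma energy_lift: "x \<in> aligned \<Longrightarrow> energy K wK (lift x) = energy K wL x"
  unfolding energy_def
proof (intro sum.cong refl)
  fix v e assume x: "x \<in> aligned" and e: "e \<in> edges_at K v"
  then have c: "card e = 2" "v \<in> e" by (auto simp: edges_at_def)
  define u where "u = other_end e v"
  let ?gK = "deg_scaled wK (lift x)" and ?gL = "deg_scaled wL x"
  show "wK e * ((?gK v)\<^sup>2 - ?gK v * ?gK (other_end e v)) = wL e * ((?gL v)\<^sup>2 - ?gL v * ?gL (other_end e v))"
  proof (cases "e \<in> H")
    case True
    have VH: "v \<in> VH" "u \<in> VH" using H_edge_endpoints[OF True c] u_def by auto
    have ratio_eq: "ratio x u = ratio x v" using rep_edge[OF True c] u_def by (simp add: ratio_def)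
    have tK: "wK e * ((?gK v)\<^sup>2 - ?gK v * ?gK (other_end e v)) = 0"
    proof (cases "wK e = 0")
      case False
      then have "wK {v} > 0" "wK {u} > 0"
        using GK.vertex_weight_pos[OF e] GK.other_end_weight_pos[OF e] u_def by auto
      then show ?thesis
        using VH ratio_eq
          by (simp add: u_def deg_scaled_def lift_def sqrt_weight_def power2_eq_square)
    qed simp
    have tL: "wL e * ((?gL v)\<^sup>2 - ?gL v * ?gL (other_end e v)) = 0"
    proof (cases "wL e = 0")
      case False
      then have "wL {v} > 0" "wL {u} > 0"
        using GL.vertex_weight_pos[OF e] GL.other_end_weight_pos[OF e] u_def by auto
      then show ?thesis
        using VH ratio_eq aligned_coord[OF x]
          by (simp add: u_def deg_scaled_def sqrt_weight_L_def power2_eq_square)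
    qed simp
    show ?thesis unfolding tK tL by (rule refl)
  next
    case False
    then have same: "wL e = wK e" by (rule wL_outside_H)
    show ?thesis
    proof (cases "wK e = 0")
      case nz: False
      then have "wK {v} > 0" "wK {u} > 0" "wL {v} > 0" "wL {u} > 0"
        using GK.vertex_weight_pos[OF e] GK.other_end_weight_pos[OF e]
          GL.vertex_weight_pos[OF e] GL.other_end_weight_pos[OF e] same u_def by auto
      then show ?thesis using deg_scaled_lift[OF x] same by (simp add: u_def)
    qed (simp add: same)
  qed
qed

lemma lower_interlacing:
  assumes eigK: "sorted_eigenvalues (lap_matrix K wK) lams"
    and eigL: "sorted_eigenvalues (lap_matrix K wL) thetas"
    and k: "1 \<le> k" "k \<le> CARD('n)"
  shows "eig_ext lams (int k - int (card VH) + int (num_components H)) \<le> thetas ! (k - 1)"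
proof -
  have "thetas ! (k - 1) \<in> set thetas" using k eigL by (simp add: sorted_eigenvalues_def)
  then have theta_nonneg: "0 \<le> thetas ! (k - 1)" by (rule GL.eigenvalue_bounds[OF eigL])
  show ?thesis
  proof (cases "int k - int (card VH) + int (num_components H) \<le> 0")
    case True
    then show ?thesis using theta_nonneg by (simp add: eig_ext_def)
  next
    case False
    define j where "j = nat (int k - int (card VH) + int (num_components H))"
    have j: "1 \<le> j" "j + CARD('n) \<le> dim aligned + k"
      using False dim_aligned unfolding j_def by linarith+
    have "\<forall>x\<in>aligned. lift x \<bullet> (sym_lap_matrix K wK *v lift x) = x \<bullet> (sym_lap_matrix K wL *v x)"
      using energy_lift by (simp add: GK.rayleigh_sym_lap_matrix GL.rayleigh_sym_lap_matrix)
    then have "lams ! (j - 1) \<le> thetas ! (k - 1)"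
      using eigenvalue_le_via_linear_map[OF GK.sym_lap_matrix_symmetric
          GK.sorted_eigenvalues_sym_lap_matrix[THEN iffD1, OF eigK] GL.sym_lap_matrix_symmetric
          GL.sorted_eigenvalues_sym_lap_matrix[THEN iffD1, OF eigL] subspace_aligned linear_lift
          inj_on_lift _ _ j k(2) theta_nonneg] norm_le_lift by blast
    moreover have "j \<le> length lams"
      using num_components_le k eigK unfolding j_def sorted_eigenvalues_def by linarith
    ultimately show ?thesis using False by (simp add: eig_ext_def j_def)
  qed
qed

end

lemma (in proper_difference) component_representatives_exist:
  "\<exists>rep. component_representatives K H wK wH rep"
proof -
  define A where "A = {(x, y). {x, y} \<in> H \<and> x \<noteq> y}"
  define R where "R = {(u, v). u \<in> VH \<and> v \<in> VH \<and> (u, v) \<in> A\<^sup>*}"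
  have "sym A" by (auto simp: A_def sym_def insert_commute)
  then have "(u, v) \<in> A\<^sup>* \<Longrightarrow> (v, u) \<in> A\<^sup>*" for u v using sym_rtrancl unfolding sym_def by blast
  then have eqv: "equiv VH R"
    unfolding equiv_def refl_on_def sym_def trans_def R_def by (auto intro: rtrancl_trans)
  obtain rep where rep: "\<And>v. v \<in> VH \<Longrightarrow> (v, rep v) \<in> R" "\<And>u v. (u, v) \<in> R \<Longrightarrow> rep u = rep v"
      "card (rep ` VH) = card (VH // R)"
    using equiv_representatives[OF eqv] by blast
  have "rep (other_end e v) = rep v" if e: "e \<in> H" "card e = 2" "v \<in> e" for e v
  proof -
    have "{v, other_end e v} \<in> H" using e(1) by (subst (asm) edge_other_end(1)[OF e(2,3)])
    then have "(v, other_end e v) \<in> A" using edge_other_end(2)[OF e(2,3)] by (simp add: A_def)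
    then have "(v, other_end e v) \<in> R" using H_edge_endpoints[OF e] by (simp add: R_def)
    then show ?thesis by (rule rep(2)[THEN sym])
  qed
  moreover have "rep v \<in> VH" "rep (rep v) = rep v" if "v \<in> VH" for v
  proof -
    have "(v, rep v) \<in> R" using rep(1) that .
    then show "rep v \<in> VH" by (simp add: R_def)
    show "rep (rep v) = rep v" using rep(2)[OF \<open>(v, rep v) \<in> R\<close>] by (rule sym)
  qed
  moreover have "card (rep ` VH) = num_components H"
    using rep(3) by (simp add: num_components_def R_def A_def)
  ultimately have "component_representatives K H wK wH rep"
    unfolding component_representatives_def component_representatives_axioms_def
    using proper_difference_axioms by blast
  then show ?thesis by blast
qed

theorem corollary2p12:
  fixes K H :: "'n::finite set set" and wK wH :: "'n set \<Rightarrow> real"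
    and lams thetas :: "real list"
  assumes K_complex: "is_complex1 K" and K_verts: "vertices K = UNIV"
    and wK_nonneg: "\<forall>F\<in>K. wK F \<ge> 0"
    and wH_nonneg: "\<forall>F\<in>H. wH F \<ge> 0"
    and sub: "weighted_subgraph H wH K wK"
    and diff: "is_complex1 {F \<in> K. diff_weight wK H wH F > 0}"
    and normK: "normalizing K wK"
    and normL: "normalizing K (diff_weight wK H wH)"
    and eigK: "sorted_eigenvalues (lap_matrix K wK) lams"
    and eigL: "sorted_eigenvalues (lap_matrix K (diff_weight wK H wH)) thetas"
    and k: "1 \<le> k" "k \<le> CARD('n)"
  shows "eig_ext lams (int k - int (card (vertices H)) + int (num_components H)) \<le> thetas ! (k - 1)
       \<and> thetas ! (k - 1) \<le> eig_ext lams (int k + int (card (vertices H)))"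
proof -
  interpret proper_difference K H wK wH
    by (rule proper_difference.intro[OF K_verts wK_nonneg wH_nonneg sub normK normL])
  obtain rep where "component_representatives K H wK wH rep"
    using component_representatives_exist by blast
  then interpret component_representatives K H wK wH rep .
  show ?thesis using lower_interlacing[OF eigK eigL k] upper_interlacing[OF eigK eigL k] by simp
qed

end
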